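(* If $S$ is an idempotent semiring satisfying $x\approx xyx+x+xyx$, then $S$ satisfies $xyzx\approx xzyx+xyzx+xzyx$.
   Context: An idempotent semiring is an algebra $(S,+,\cdot)$ with two binary operations such that $(S,+)$ and $(S,\cdot)$ are bands (associative, with $x+x=x$ and $xx=x$), and both distributive laws $x(y+z)=xy+xz$ and $(x+y)z=xz+yz$ hold; addition is not assumed commutative. *)

theory Defs
  imports Main
begin

definition band :: "('a \<Rightarrow> 'a \<Rightarrow> 'a) \<Rightarrow> bool" where
  "band f \<longleftrightarrow> (\<forall>x y z. f (f x y) z = f x (f y z)) \<and> (\<forall>x. f x x = x)"

text \<open>Idempotent semiring (S,+,*): both reducts are bands and both distributive
laws hold; addition need not be commutative.  The carrier is the whole type.\<close>
definition idempotent_semiring :: "('a \<Rightarrow> 'a \<Rightarrow> 'a) \<Rightarrow> ('a \<Rightarrow> 'a \<Rightarrow> 'a) \<Rightarrow> bool" where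
  "idempotent_semiring add mul \<longleftrightarrow> band add \<and> band mul \<and>
     (\<forall>x y z. mul x (add y z) = add (mul x y) (mul x z)) \<and>
     (\<forall>x y z. mul (add x y) z = add (mul x z) (mul y z))"

end

theory Submission
  imports Defs
begin

text \<open>Write \<open>a = xyzx\<close> and \<open>b = xzyx\<close>. The hypothesis \<open>x = xyx + x + xyx\<close> makes every
sandwich \<open>xwx\<close>, in particular \<open>b\<close>, absorbed by \<open>x\<close> on both sides. Multiplying \<open>x = x + b\<close> and
\<open>x = b + x\<close> on the right by \<open>yzx\<close> gives \<open>a = a + c = c + a\<close> with \<open>c = b\<cdot>yzx\<close>, and multiplying
them on the left by \<open>b\<cdot>yz\<close> gives \<open>c = c + b = b + c\<close>, because \<open>b\<cdot>yz\<cdot>b = b\<close> in every band.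
Hence \<open>a + b = a = b + a\<close>, so \<open>a = b + a + b\<close>.\<close>

locale band_op =
  fixes op :: "'a \<Rightarrow> 'a \<Rightarrow> 'a"  (infixl "\<cdot>" 70)
  assumes band: "band op"
begin

lemma assoc: "x \<cdot> y \<cdot> z = x \<cdot> (y \<cdot> z)"
  using band unfolding band_def by blast

lemma idem [simp]: "x \<cdot> x = x"
  using band unfolding band_def by blast

lemma absorb_of_sandwich:
  assumes "x = a \<cdot> x \<cdot> a"
  shows "x \<cdot> a = x" and "a \<cdot> x = x"
proof -
  have "x \<cdot> a = a \<cdot> x \<cdot> a \<cdot> a" by (subst assms) simp
  also have "\<dots> = x" using assms by (metis assoc idem)
  finally show "x \<cdot> a = x" .
  have "a \<cdot> x = a \<cdot> (a \<cdot> x \<cdot> a)" by (subst assms) simp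
  also have "\<dots> = x" using assms by (metis assoc idem)
  finally show "a \<cdot> x = x" .
qed

lemma sandwich_reverse: "x \<cdot> z \<cdot> y \<cdot> x \<cdot> (y \<cdot> z) \<cdot> (x \<cdot> z \<cdot> y \<cdot> x) = x \<cdot> z \<cdot> y \<cdot> x"
  by (metis assoc idem)

end

locale idem_semiring_op =
  fixes plus :: "'a \<Rightarrow> 'a \<Rightarrow> 'a"  (infixl "\<oplus>" 65)
    and times :: "'a \<Rightarrow> 'a \<Rightarrow> 'a"  (infixl "\<cdot>" 70)
  assumes idempotent_semiring: "idempotent_semiring plus times"
begin

sublocale add: band_op plus
  using idempotent_semiring unfolding idempotent_semiring_def by (unfold_locales) blast

sublocale mult: band_op times
  using idempotent_semiring unfolding idempotent_semiring_def by (unfold_locales) blast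

lemma distrib_left: "x \<cdot> (y \<oplus> z) = x \<cdot> y \<oplus> x \<cdot> z"
  using idempotent_semiring unfolding idempotent_semiring_def by blast

lemma distrib_right: "(x \<oplus> y) \<cdot> z = x \<cdot> z \<oplus> y \<cdot> z"
  using idempotent_semiring unfolding idempotent_semiring_def by blast

lemma
  assumes "\<forall>x y. x = x \<cdot> y \<cdot> x \<oplus> x \<oplus> x \<cdot> y \<cdot> x"
  shows sandwich_absorb_right: "x \<oplus> x \<cdot> w \<cdot> x = x"
    and sandwich_absorb_left: "x \<cdot> w \<cdot> x \<oplus> x = x"
  using add.absorb_of_sandwich assms by blast+

theorem xyzx_eq:
  assumes "\<forall>x y. x = x \<cdot> y \<cdot> x \<oplus> x \<oplus> x \<cdot> y \<cdot> x"
  shows "x \<cdot> y \<cdot> z \<cdot> x = x \<cdot> z \<cdot> y \<cdot> x \<oplus> x \<cdot> y \<cdot> z \<cdot> x \<oplus> x \<cdot> z \<cdot> y \<cdot> x"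
proof -
  define a where "a = x \<cdot> y \<cdot> z \<cdot> x"
  define b where "b = x \<cdot> z \<cdot> y \<cdot> x"
  define c where "c = b \<cdot> (y \<cdot> z \<cdot> x)"
  have xb: "x \<oplus> b = x" and bx: "b \<oplus> x = x"
    using sandwich_absorb_right[OF assms, of x "z \<cdot> y"] sandwich_absorb_left[OF assms, of x "z \<cdot> y"]
    by (simp_all add: b_def mult.assoc)
  have "(x \<oplus> b) \<cdot> (y \<cdot> z \<cdot> x) = a" "(b \<oplus> x) \<cdot> (y \<cdot> z \<cdot> x) = a"
    by (simp_all add: xb bx a_def mult.assoc)
  then have ac: "a \<oplus> c = a" and ca: "c \<oplus> a = a"
    by (simp_all add: distrib_right a_def c_def mult.assoc)
  have bb: "b \<cdot> (y \<cdot> (z \<cdot> b)) = b"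
    using mult.sandwich_reverse[of x z y] by (simp add: b_def mult.assoc)
  have "b \<cdot> (y \<cdot> z) \<cdot> (x \<oplus> b) = c" "b \<cdot> (y \<cdot> z) \<cdot> (b \<oplus> x) = c"
    by (simp_all add: xb bx c_def mult.assoc)
  then have cb: "c \<oplus> b = c" and bc: "b \<oplus> c = c"
    by (simp_all add: distrib_left bb c_def mult.assoc)
  have "a \<oplus> b = a" using ac cb by (metis add.assoc)
  moreover have "b \<oplus> a = a" using ca bc by (metis add.assoc)
  ultimately show ?thesis
    by (simp flip: a_def b_def)
qed

end

theorem lemma4p6:
  fixes add mul :: "'a \<Rightarrow> 'a \<Rightarrow> 'a"
  assumes "idempotent_semiring add mul"
    and "\<forall>x y. x = add (add (mul (mul x y) x) x) (mul (mul x y) x)"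
  shows "\<forall>x y z. mul (mul (mul x y) z) x =
           add (add (mul (mul (mul x z) y) x) (mul (mul (mul x y) z) x)) (mul (mul (mul x z) y) x)"
proof -
  interpret idem_semiring_op add mul by (rule idem_semiring_op.intro) fact
  show ?thesis using xyzx_eq[OF assms(2)] by blast
qed

end
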